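(* Let $(A,u_A)$ be an abstract state space and let $(B,u_B)$ be any fixed abstract state space whose ordered linear space $B$ is order-isomorphic to $A^*$. The following are equivalent: (a) $A$ is homogeneous; (b) every normalized state $\alpha$ in the interior of $A_+$ is the $A$-marginal of an isomorphism state in $B\otimes_{\max}A$, i.e., there is a state $\omega\in B\otimes_{\max}A$ such that $\hat\omega:B^*\to A$ is an order-isomorphism and $\hat\omega(u_B)=\alpha$.
   Context: An abstract state space is a pair $(A,u_A)$ where $A$ is a finite-dimensional real vector space with a closed, pointed, generating convex cone $A_+$, and $u_A$ is an interior point of the dual cone $A^*_+$; a normalized state is $\alpha\in A_+$ with $u_A(\alpha)=1$. An order-isomorphism is a linear bijection $\phi$ with $\phi(x)\ge0$ iff $x\ge0$. $A$ is homogeneous if the group of order-automorphisms of $A$ acts transitively on the interior of $A_+$. $B\otimes_{\max}A$ is the space of bilinear forms on $B^*\times A^*$ nonnegative on $B^*_+\times A^*_+$; a state is such a form with $\omega(u_B,u_A)=1$; $\hat\omega:B^*\to A$ is defined by $\hat\omega(b)(a)=\omega(b,a)$, and the $A$-marginal of $\omega$ is $\hat\omega(u_B)$. An isomorphism state is a state $\omega$ for which $\hat\omega$ is an order-isomorphism. *)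

theory Defs
  imports "HOL-Analysis.Analysis"
begin

text \<open>Convention: a finite-dimensional real vector space is a type of class euclidean_space.
  Its dual space is identified with the space itself via the inner product: the
  functional represented by y is (\<lambda>x. inner y x).\<close>

definition dual_cone :: "'a::euclidean_space set \<Rightarrow> 'a set" where
  "dual_cone C = {y. \<forall>x\<in>C. 0 \<le> inner y x}"

definition proper_cone :: "'a::euclidean_space set \<Rightarrow> bool" where
  "proper_cone C \<longleftrightarrow> closed C \<and> convex C \<and> cone C \<and> C \<inter> uminus ` C = {0}
     \<and> span C = UNIV"

text \<open>Abstract state space (A, u_A): A_+ = C, u_A = (\<lambda>x. inner u x).\<close>
definition abstract_state_space :: "'a::euclidean_space set \<Rightarrow> 'a \<Rightarrow> bool" where
  "abstract_state_space C u \<longleftrightarrow> proper_cone C \<and> u \<in> interior (dual_cone C)"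

definition normalized_state :: "'a::euclidean_space set \<Rightarrow> 'a \<Rightarrow> 'a \<Rightarrow> bool" where
  "normalized_state C u \<alpha> \<longleftrightarrow> \<alpha> \<in> C \<and> inner u \<alpha> = 1"

definition order_iso :: "('a::euclidean_space \<Rightarrow> 'b::euclidean_space) \<Rightarrow> 'a set \<Rightarrow> 'b set \<Rightarrow> bool" where
  "order_iso \<phi> C D \<longleftrightarrow> linear \<phi> \<and> bij \<phi> \<and> (\<forall>x. \<phi> x \<in> D \<longleftrightarrow> x \<in> C)"

definition homogeneous :: "'a::euclidean_space set \<Rightarrow> bool" where
  "homogeneous C \<longleftrightarrow>
     (\<forall>x\<in>interior C. \<forall>y\<in>interior C. \<exists>\<phi>. order_iso \<phi> C C \<and> \<phi> x = y)"

text \<open>Elements of B \<otimes>_max A: bilinear forms on B^* \<times> A^* (B^* = 'b, A^* = 'a via inner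
  product), nonnegative on B^*_+ \<times> A^*_+.\<close>
definition max_tensor :: "'b::euclidean_space set \<Rightarrow> 'a::euclidean_space set
    \<Rightarrow> ('b \<Rightarrow> 'a \<Rightarrow> real) set" where
  "max_tensor D C = {\<omega>. bilinear \<omega> \<and>
     (\<forall>b\<in>dual_cone D. \<forall>a\<in>dual_cone C. 0 \<le> \<omega> b a)}"

definition tensor_state :: "'b::euclidean_space set \<Rightarrow> 'b \<Rightarrow> 'a::euclidean_space set \<Rightarrow> 'a
    \<Rightarrow> ('b \<Rightarrow> 'a \<Rightarrow> real) \<Rightarrow> bool" where
  "tensor_state D uB C uA \<omega> \<longleftrightarrow> \<omega> \<in> max_tensor D C \<and> \<omega> uB uA = 1"

text \<open>\<omega>-hat : B^* \<rightarrow> A, the unique vector with inner (omega_hat \<omega> b) a = \<omega> b a.\<close>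
definition omega_hat :: "('b \<Rightarrow> 'a::euclidean_space \<Rightarrow> real) \<Rightarrow> 'b \<Rightarrow> 'a" where
  "omega_hat \<omega> b = (\<Sum>i\<in>Basis. \<omega> b i *\<^sub>R i)"

end

theory Submission
  imports Defs
begin

text \<open>By the bipolar theorem, the adjoint of an order-isomorphism from B onto A* is an
  order-isomorphism from A onto B*; its inverse theta maps u_B into the interior of A_+. A linear
  map v from B* to A is omega-hat of the bilinear form (b, a) \<mapsto> a(v b), which is an isomorphism
  state when v is an order-isomorphism with u_A(v u_B) = 1. So if A is homogeneous, composing
  theta with an automorphism moving theta u_B to alpha yields an isomorphism state with marginal
  alpha. Conversely, if every normalized interior state is such a marginal, then every interior
  ray of A_+ meets the orbit of u_B under order-isomorphisms from B* onto A, and composing one of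
  them with the inverse of another, up to rescaling, moves any interior point to any other.\<close>

lemma bij_linear_imp_inv_linear:
  fixes f :: "'a::euclidean_space \<Rightarrow> 'b::euclidean_space"
  assumes "linear f" "bij f"
  shows "linear (inv f)"
proof (rule linearI)
  have inj: "inj f" and f_inv: "\<And>y. f (inv f y) = y"
    using assms(2) by (auto simp: bij_def surj_f_inv_f)
  fix x y c
  show "inv f (x + y) = inv f x + inv f y"
    by (rule injD[OF inj]) (simp add: f_inv linear_add[OF assms(1)])
  show "inv f (c *\<^sub>R x) = c *\<^sub>R inv f x"
    by (rule injD[OF inj]) (simp add: f_inv linear_scale[OF assms(1)])
qed

lemma order_iso_image:
  assumes "order_iso f C D"
  shows "f ` C = D"
  using assms unfolding order_iso_def by (auto simp: image_iff) (metis bij_is_surj surj_f_inv_f)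

lemma order_iso_inv:
  fixes f :: "'a::euclidean_space \<Rightarrow> 'b::euclidean_space"
  assumes "order_iso f C D"
  shows "order_iso (inv f) D C"
proof -
  have f: "linear f" "bij f" "\<And>x. f x \<in> D \<longleftrightarrow> x \<in> C"
    using assms by (auto simp: order_iso_def)
  moreover have "f (inv f y) = y" for y
    using f(2) by (simp add: bij_is_surj surj_f_inv_f)
  ultimately show ?thesis
    by (metis order_iso_def bij_imp_bij_inv bij_linear_imp_inv_linear)
qed

lemma order_iso_comp:
  assumes "order_iso f C D" "order_iso g D E"
  shows "order_iso (g \<circ> f) C E"
  using assms by (auto simp: order_iso_def linear_compose bij_comp)

lemma order_iso_scaleR:
  fixes C :: "'a::euclidean_space set"
  assumes "cone C" "c > 0"
  shows "order_iso (\<lambda>x. c *\<^sub>R x) C C"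
  unfolding order_iso_def
proof (intro conjI allI)
  show "linear (\<lambda>x::'a. c *\<^sub>R x)"
    by (simp add: linear_scaleR)
  have "c \<noteq> 0"
    using assms(2) by simp
  then show "bij (\<lambda>x::'a. c *\<^sub>R x)"
    by (intro bij_betw_byWitness[where f'="\<lambda>x. (1/c) *\<^sub>R x"]) auto
  fix x
  show "c *\<^sub>R x \<in> C \<longleftrightarrow> x \<in> C"
  proof
    assume "c *\<^sub>R x \<in> C"
    moreover have "0 \<le> 1/c"
      using assms(2) by simp
    ultimately have "(1/c) *\<^sub>R (c *\<^sub>R x) \<in> C"
      using assms(1) unfolding cone_def by blast
    then show "x \<in> C"
      using assms(2) by simp
  qed (use assms in \<open>auto simp: cone_def\<close>)
qed

lemma order_iso_interior:
  fixes f :: "'a::euclidean_space \<Rightarrow> 'b::euclidean_space"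
  assumes "order_iso f C D"
  shows "f ` interior C = interior D"
  using assms interior_bijective_linear_image[of f C] order_iso_image[OF assms]
  by (simp add: order_iso_def)

lemma order_iso_adjoint:
  fixes f :: "'a::euclidean_space \<Rightarrow> 'b::euclidean_space"
  assumes "order_iso f C D"
  shows "order_iso (adjoint f) (dual_cone D) (dual_cone C)"
  unfolding order_iso_def
proof (intro conjI allI)
  have f: "linear f" "bij f"
    using assms by (auto simp: order_iso_def)
  then show "linear (adjoint f)" "bij (adjoint f)"
    by (auto simp: adjoint_linear bij_def)
  fix x
  have "inner (adjoint f x) c = inner x (f c)" for c
    using adjoint_works[OF f(1), of c x] by (simp add: inner_commute)
  then have "adjoint f x \<in> dual_cone C \<longleftrightarrow> (\<forall>c\<in>C. 0 \<le> inner x (f c))"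
    by (simp add: dual_cone_def)
  also have "\<dots> \<longleftrightarrow> x \<in> dual_cone D"
    using order_iso_image[OF assms] by (auto simp: dual_cone_def)
  finally show "adjoint f x \<in> dual_cone C \<longleftrightarrow> x \<in> dual_cone D" .
qed

lemma dual_cone_dual_cone:
  fixes C :: "'a::euclidean_space set"
  assumes "closed C" "convex C" "cone C" "C \<noteq> {}"
  shows "dual_cone (dual_cone C) = C"
proof
  show "C \<subseteq> dual_cone (dual_cone C)"
    by (auto simp: dual_cone_def inner_commute)
  show "dual_cone (dual_cone C) \<subseteq> C"
  proof
    fix z assume z: "z \<in> dual_cone (dual_cone C)"
    show "z \<in> C"
    proof (rule ccontr)
      assume "z \<notin> C"
      then obtain a b where ab: "inner a z < b" "\<forall>x\<in>C. b < inner a x"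
        using separating_hyperplane_closed_point[OF assms(2,1)] by blast
      have "0 \<in> C"
        using assms(3,4) cone_contains_0 by blast
      then have b: "b < 0"
        using ab by force
      \<comment> \<open>a is nonnegative on C: otherwise a suitable positive multiple of x \<in> C would have a-value b.\<close>
      have "a \<in> dual_cone C"
        unfolding dual_cone_def
      proof (clarify, rule ccontr)
        fix x assume x: "x \<in> C" "\<not> 0 \<le> inner a x"
        have "(b / inner a x) *\<^sub>R x \<in> C"
          using assms(3) x b unfolding cone_def by (simp add: divide_nonpos_neg)
        moreover have "inner a ((b / inner a x) *\<^sub>R x) = b"
          using x by simp
        ultimately show False
          using ab by force
      qed
      then show False
        using z ab b by (force simp: dual_cone_def inner_commute)
    qed
  qed
qed

lemma order_iso_inv_adjoint:
  fixes C :: "'a::euclidean_space set" and \<phi> :: "'b::euclidean_space \<Rightarrow> 'a"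
  assumes "closed C" "convex C" "cone C" "C \<noteq> {}" "order_iso \<phi> D (dual_cone C)"
  shows "order_iso (inv (adjoint \<phi>)) (dual_cone D) C"
  using order_iso_inv[OF order_iso_adjoint[OF assms(5)]] dual_cone_dual_cone[OF assms(1-4)]
  by simp

lemma interior_pointed_cone_nonzero:
  fixes C :: "'a::euclidean_space set"
  assumes "C \<inter> uminus ` C = {0}" "x \<in> interior C"
  shows "x \<noteq> 0"
proof
  assume "x = 0"
  then obtain e where e: "e > 0" "ball 0 e \<subseteq> C"
    using assms(2) by (meson mem_interior)
  obtain i :: 'a where i: "i \<in> Basis"
    using nonempty_Basis by blast
  define v where "v = (e/2) *\<^sub>R i"
  have "norm v < e"
    using e i by (simp add: v_def)
  then have "v \<in> C" "-v \<in> C"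
    using e by (auto simp: subset_iff dist_norm)
  then have "v \<in> C \<inter> uminus ` C"
    by force
  moreover have "v \<noteq> 0"
    using e i by (simp add: v_def nonzero_Basis)
  ultimately show False
    using assms(1) by blast
qed

lemma interior_dual_cone_pos:
  fixes C :: "'a::euclidean_space set"
  assumes "u \<in> interior (dual_cone C)" "x \<in> C" "x \<noteq> 0"
  shows "0 < inner u x"
proof -
  obtain e where e: "e > 0" "ball u e \<subseteq> dual_cone C"
    using assms(1) by (meson mem_interior)
  define w where "w = u - (e/2 / norm x) *\<^sub>R x"
  have "dist u w < e"
    using e assms(3) by (simp add: w_def dist_norm)
  then have "0 \<le> inner w x"
    using e assms(2) by (auto simp: dual_cone_def)
  also have "inner w x = inner u x - e/2 * norm x"
    using assms(3) by (simp add: w_def inner_diff_left power2_norm_eq_inner[symmetric]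
        power2_eq_square)
  finally have "e/2 * norm x \<le> inner u x"
    by simp
  moreover have "0 < e/2 * norm x"
    using e assms(3) by simp
  ultimately show ?thesis
    by linarith
qed

lemma abstract_state_space_interior_pos:
  assumes "abstract_state_space C u" "x \<in> interior C"
  shows "0 < inner u x"
proof (rule interior_dual_cone_pos)
  show "u \<in> interior (dual_cone C)"
    using assms(1) by (simp add: abstract_state_space_def)
  show "x \<in> C"
    using assms(2) interior_subset by blast
  have "C \<inter> uminus ` C = {0}"
    using assms(1) by (simp add: abstract_state_space_def proper_cone_def)
  then show "x \<noteq> 0"
    using assms(2) by (rule interior_pointed_cone_nonzero)
qed

lemma omega_hat_inner: "omega_hat (\<lambda>b a. inner (v b) a) = v"
proof
  fix b
  show "omega_hat (\<lambda>b a. inner (v b) a) b = v b"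
    using euclidean_representation[of "v b"] by (simp add: omega_hat_def inner_commute)
qed

lemma tensor_state_inner:
  fixes v :: "'b::euclidean_space \<Rightarrow> 'a::euclidean_space"
  assumes "linear v" "v ` dual_cone D \<subseteq> C" "inner uA (v uB) = 1"
  shows "tensor_state D uB C uA (\<lambda>b a. inner (v b) a)"
  unfolding tensor_state_def max_tensor_def
proof (intro conjI CollectI ballI)
  show "bilinear (\<lambda>b a. inner (v b) a)"
    using assms(1) by (simp add: bilinear_def linear_iff inner_add_left inner_add_right)
  fix b a assume "b \<in> dual_cone D" "a \<in> dual_cone C"
  then have "0 \<le> inner a (v b)"
    using assms(2) by (auto simp: dual_cone_def)
  then show "0 \<le> inner (v b) a"
    by (simp add: inner_commute)
qed (use assms(3) in \<open>simp add: inner_commute\<close>)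

lemma homogeneous_imp_isomorphism_state:
  assumes "homogeneous C" "order_iso \<theta> (dual_cone D) C" "uB \<in> interior (dual_cone D)"
    and "normalized_state C uA \<alpha>" "\<alpha> \<in> interior C"
  shows "\<exists>\<omega>. tensor_state D uB C uA \<omega> \<and> order_iso (omega_hat \<omega>) (dual_cone D) C
           \<and> omega_hat \<omega> uB = \<alpha>"
proof -
  have "\<theta> uB \<in> interior C"
    using assms(3) order_iso_interior[OF assms(2)] by blast
  then obtain g where g: "order_iso g C C" "g (\<theta> uB) = \<alpha>"
    using assms(1,5) unfolding homogeneous_def by blast
  define v where "v = g \<circ> \<theta>"
  have v: "order_iso v (dual_cone D) C"
    unfolding v_def using assms(2) g(1) by (rule order_iso_comp)
  have state: "tensor_state D uB C uA (\<lambda>b a. inner (v b) a)"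
  proof (rule tensor_state_inner)
    show "linear v"
      using v by (simp add: order_iso_def)
    show "v ` dual_cone D \<subseteq> C"
      using order_iso_image[OF v] by simp
    show "inner uA (v uB) = 1"
      using assms(4) g(2) by (simp add: v_def normalized_state_def)
  qed
  have "v uB = \<alpha>"
    using g(2) by (simp add: v_def)
  with state v show ?thesis
    by (intro exI[of _ "\<lambda>b a. inner (v b) a"]) (simp add: omega_hat_inner)
qed

lemma homogeneous_if_interior_rays_in_orbit:
  fixes C :: "'a::euclidean_space set" and K :: "'b::euclidean_space set"
  assumes "cone C"
    and orbit: "\<And>x. x \<in> interior C \<Longrightarrow> \<exists>f c. order_iso f K C \<and> 0 < c \<and> f e = c *\<^sub>R x"
  shows "homogeneous C"
  unfolding homogeneous_def
proof (intro ballI)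
  fix x y assume "x \<in> interior C" "y \<in> interior C"
  obtain f c where f: "order_iso f K C" "0 < c" "f e = c *\<^sub>R x"
    using orbit[OF \<open>x \<in> interior C\<close>] by blast
  obtain g d where g: "order_iso g K C" "0 < d" "g e = d *\<^sub>R y"
    using orbit[OF \<open>y \<in> interior C\<close>] by blast
  define h where "h = (\<lambda>z. (1/d) *\<^sub>R z) \<circ> g \<circ> inv f \<circ> (\<lambda>z. c *\<^sub>R z)"
  have "order_iso (inv f \<circ> (\<lambda>z. c *\<^sub>R z)) C K"
    by (rule order_iso_comp[OF order_iso_scaleR[OF assms(1) f(2)] order_iso_inv[OF f(1)]])
  moreover have "order_iso ((\<lambda>z. (1/d) *\<^sub>R z) \<circ> g) K C"
    using order_iso_comp[OF g(1) order_iso_scaleR[OF assms(1)]] g(2) by simp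
  ultimately have "order_iso (((\<lambda>z. (1/d) *\<^sub>R z) \<circ> g) \<circ> (inv f \<circ> (\<lambda>z. c *\<^sub>R z))) C C"
    by (rule order_iso_comp)
  then have "order_iso h C C"
    by (simp add: h_def comp_assoc)
  moreover have "h x = y"
    using f g by (simp add: h_def order_iso_def bij_is_inj flip: f(3))
  ultimately show "\<exists>\<phi>. order_iso \<phi> C C \<and> \<phi> x = y"
    by blast
qed

lemma isomorphism_state_marginals_imp_homogeneous:
  fixes C :: "'a::euclidean_space set" and D :: "'b::euclidean_space set"
  assumes "abstract_state_space C uA"
    and marginal: "\<And>\<alpha>. normalized_state C uA \<alpha> \<Longrightarrow> \<alpha> \<in> interior C \<Longrightarrow>
                     \<exists>f. order_iso f (dual_cone D) C \<and> f uB = \<alpha>"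
  shows "homogeneous C"
proof -
  have "cone C"
    using assms(1) by (simp add: abstract_state_space_def proper_cone_def)
  moreover have "\<exists>f c. order_iso f (dual_cone D) C \<and> 0 < c \<and> f uB = c *\<^sub>R x"
    if x: "x \<in> interior C" for x
  proof -
    define c where "c = 1 / inner uA x"
    have c: "0 < c"
      using abstract_state_space_interior_pos[OF assms(1) x] by (simp add: c_def)
    have "c *\<^sub>R x \<in> interior C"
      using order_iso_interior[OF order_iso_scaleR[OF \<open>cone C\<close> c]] x by blast
    moreover have "normalized_state C uA (c *\<^sub>R x)"
      using calculation interior_subset abstract_state_space_interior_pos[OF assms(1) x]
      by (auto simp: normalized_state_def c_def)
    ultimately obtain f where "order_iso f (dual_cone D) C" "f uB = c *\<^sub>R x"
      using marginal by blast
    with c show ?thesis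
      by blast
  qed
  ultimately show ?thesis
    by (rule homogeneous_if_interior_rays_in_orbit)
qed

theorem theorem4p1:
  fixes C :: "'a::euclidean_space set" and uA :: 'a
    and D :: "'b::euclidean_space set" and uB :: 'b
  assumes "abstract_state_space C uA"
    and "abstract_state_space D uB"
    and "\<exists>\<phi>::'b \<Rightarrow> 'a. order_iso \<phi> D (dual_cone C)"
  shows "homogeneous C \<longleftrightarrow>
    (\<forall>\<alpha>. normalized_state C uA \<alpha> \<and> \<alpha> \<in> interior C \<longrightarrow>
       (\<exists>\<omega>. tensor_state D uB C uA \<omega> \<and> order_iso (omega_hat \<omega>) (dual_cone D) C
             \<and> omega_hat \<omega> uB = \<alpha>))"
proof
  assume hom: "homogeneous C"
  obtain \<phi> :: "'b \<Rightarrow> 'a" where "order_iso \<phi> D (dual_cone C)"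
    using assms(3) by blast
  moreover have "closed C" "convex C" "cone C" "C \<noteq> {}"
    using assms(1) by (auto simp: abstract_state_space_def proper_cone_def)
  ultimately have \<theta>: "order_iso (inv (adjoint \<phi>)) (dual_cone D) C"
    using order_iso_inv_adjoint by blast
  have uB: "uB \<in> interior (dual_cone D)"
    using assms(2) by (simp add: abstract_state_space_def)
  show "\<forall>\<alpha>. normalized_state C uA \<alpha> \<and> \<alpha> \<in> interior C \<longrightarrow>
       (\<exists>\<omega>. tensor_state D uB C uA \<omega> \<and> order_iso (omega_hat \<omega>) (dual_cone D) C
             \<and> omega_hat \<omega> uB = \<alpha>)"
    using homogeneous_imp_isomorphism_state[OF hom \<theta> uB] by blast
next
  assume marginals: "\<forall>\<alpha>. normalized_state C uA \<alpha> \<and> \<alpha> \<in> interior C \<longrightarrow>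
       (\<exists>\<omega>. tensor_state D uB C uA \<omega> \<and> order_iso (omega_hat \<omega>) (dual_cone D) C
             \<and> omega_hat \<omega> uB = \<alpha>)"
  show "homogeneous C"
    by (rule isomorphism_state_marginals_imp_homogeneous[OF assms(1)]) (use marginals in blast)
qed

end
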